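(* Let $n\ge 1$, $\alpha\in[0,n)$, and let $\phi(x)=\Phi(|x|)$ be a radial function on $\mathbb{R}^n$, where $\Phi:[0,\infty)\to[0,\infty)$ is decreasing, such that $\sup_{r>0}\phi^{\alpha}_r(e_1)<\infty$, where $e_1=(1,0,\dots,0)$. Suppose that there is a constant $C$ with $\|\mathcal{M}^{\alpha}_{\phi}\mu\|_{L^{\frac{n}{n-\alpha},\infty}(\mathbb{R}^n)}\le C\,\mu(\mathbb{R}^n)$ for all finite positive Borel measures $\mu$ on $\mathbb{R}^n$. Then for every finite positive Borel measure $V$ on $\mathbb{R}^n$ and every fixed $\rho>0$, $$\lim_{t\to0^+}\Big\|\mathcal{M}^{\alpha}_{\phi}(V_t)(\cdot)-\sup_{r>0}\phi^{\alpha}_r(\cdot)\,V(\mathbb{R}^n)\Big\|_{L^{\frac{n}{n-\alpha},\infty}(\mathbb{R}^n\setminus B(0,\rho))}=0.$$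
   Context: For $r>0$, $\phi^{\alpha}_r(x)=r^{-(n-\alpha)}\phi(x/r)$. For a positive measure $\mu$, $\mathcal{M}^{\alpha}_{\phi}(\mu)(x)=\sup_{r>0}\frac{1}{r^{n-\alpha}}\int_{\mathbb{R}^n}\phi\big(\frac{x-y}{r}\big)\,d\mu(y)$. For a measure $V$ and $t>0$, the dilation $V_t$ is the measure $V_t(E)=V(E/t)$, where $E/t=\{x/t:x\in E\}$. For a measurable set $E\subset\mathbb{R}^n$ and $0<p<\infty$, $\|f\|_{L^{p,\infty}(E)}=\sup_{\lambda>0}\lambda\,|\{x\in E:|f(x)|>\lambda\}|^{1/p}$, with $|\cdot|$ Lebesgue measure; $B(0,\rho)$ is the open ball of radius $\rho$ centered at $0$. *)

theory Defs
  imports "HOL-Analysis.Analysis"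
begin

definition phi_dil :: "(real \<Rightarrow> real) \<Rightarrow> real \<Rightarrow> real \<Rightarrow> 'a::euclidean_space \<Rightarrow> real" where
  "phi_dil Phi \<alpha> r x = r powr (-(real DIM('a) - \<alpha>)) * Phi (norm ((1 / r) *\<^sub>R x))"

definition frac_max :: "(real \<Rightarrow> real) \<Rightarrow> real \<Rightarrow> 'a::euclidean_space measure \<Rightarrow> 'a \<Rightarrow> ereal" where
  "frac_max Phi \<alpha> \<mu> x =
     (SUP r\<in>{0<..}. ereal (r powr (-(real DIM('a) - \<alpha>))) *
        enn2ereal (\<integral>\<^sup>+ y. ennreal (Phi (norm ((1 / r) *\<^sub>R (x - y)))) \<partial>\<mu>))"

definition dilate_measure :: "real \<Rightarrow> 'a::euclidean_space measure \<Rightarrow> 'a measure" where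
  "dilate_measure t V = distr V borel (\<lambda>x. t *\<^sub>R x)"

definition leb_outer :: "'a::euclidean_space set \<Rightarrow> ennreal" where
  "leb_outer S = (INF A\<in>{A \<in> sets lebesgue. S \<subseteq> A}. emeasure lebesgue A)"

definition enn_pow :: "ennreal \<Rightarrow> real \<Rightarrow> ennreal" where
  "enn_pow m q = (if m = \<infinity> then \<infinity> else ennreal (enn2real m powr q))"

definition weak_Lp :: "real \<Rightarrow> 'a::euclidean_space set \<Rightarrow> ('a \<Rightarrow> ereal) \<Rightarrow> ennreal" where
  "weak_Lp p E f = (SUP l\<in>{0<..}. ennreal l * enn_pow (leb_outer {x\<in>E. \<bar>f x\<bar> > ereal l}) (1 / p))"

end

(* With K = sup_r phi^alpha_r(e_1), scaling gives sup_r phi^alpha_r(x) = K |x|^-(n-alpha).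
   Split V into its restriction to the ball B(0,R) and the remainder W. The dilation V_t carries the
   first part into B(0,tR), so for |x| >= rho >= 2tR, since the profile is decreasing,
     K (|x|+tR)^-(n-alpha) V(B(0,R))  <=  M(V_t)(x)  <=  K (|x|-tR)^-(n-alpha) V(R^n) + M(W_t)(x).
   Hence the deviation is at most D_{t,R} |x|^-(n-alpha) + M(W_t)(x), where D_{t,R} tends to
   K W(R^n) as t -> 0. The power |x|^-(n-alpha) lies in weak L^(n/(n-alpha)), and the assumed weak
   bound for M gives C W(R^n) for the second term. Let t -> 0, then R -> infinity. *)

theory Submission
  imports Defs
begin

section \<open>Weak Lebesgue quasinorm\<close>

lemma leb_outer_le_emeasure: "A \<in> sets lebesgue \<Longrightarrow> S \<subseteq> A \<Longrightarrow> leb_outer S \<le> emeasure lebesgue A"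
  unfolding leb_outer_def by (rule INF_lower) auto

lemma leb_outer_approx:
  assumes "leb_outer S < c"
  obtains A where "A \<in> sets lebesgue" "S \<subseteq> A" "emeasure lebesgue A < c"
  using assms unfolding leb_outer_def by (auto simp: INF_less_iff)

lemma leb_outer_subadditive:
  assumes "S \<subseteq> A \<union> B"
  shows "leb_outer S \<le> leb_outer A + leb_outer B"
proof (rule ennreal_le_epsilon)
  fix e :: real assume e: "0 < e"
  show "leb_outer S \<le> leb_outer A + leb_outer B + ennreal e"
  proof (cases "leb_outer A = \<infinity> \<or> leb_outer B = \<infinity>")
    case True then show ?thesis by auto
  next
    case False
    then have "leb_outer A < leb_outer A + ennreal (e/2)" "leb_outer B < leb_outer B + ennreal (e/2)"
      using e by (auto simp: ennreal_less_top less_top)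
    then obtain A' B' where A': "A' \<in> sets lebesgue" "A \<subseteq> A'" "emeasure lebesgue A' < leb_outer A + ennreal (e/2)"
      and B': "B' \<in> sets lebesgue" "B \<subseteq> B'" "emeasure lebesgue B' < leb_outer B + ennreal (e/2)"
      by (metis leb_outer_approx)
    have "leb_outer S \<le> emeasure lebesgue (A' \<union> B')"
      using assms A' B' by (intro leb_outer_le_emeasure) auto
    also have "\<dots> \<le> emeasure lebesgue A' + emeasure lebesgue B'"
      using A' B' by (intro emeasure_subadditive) auto
    also have "\<dots> \<le> (leb_outer A + ennreal (e/2)) + (leb_outer B + ennreal (e/2))"
      using A' B' by (intro add_mono) auto
    also have "\<dots> = leb_outer A + leb_outer B + ennreal e"
      using e by (simp add: ac_simps flip: ennreal_plus)
    finally show ?thesis .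
  qed
qed

lemma enn_pow_mono: "q > 0 \<Longrightarrow> a \<le> b \<Longrightarrow> enn_pow a q \<le> enn_pow b q"
  unfolding enn_pow_def
  by (auto simp: top_unique less_top intro!: ennreal_leI powr_mono2 enn2real_mono)

lemma enn_pow_ennreal: "x \<ge> 0 \<Longrightarrow> enn_pow (ennreal x) q = ennreal (x powr q)"
  unfolding enn_pow_def by simp

lemma powr_add_le_two_mult:
  fixes x y q :: real
  assumes "x \<ge> 0" "y \<ge> 0" "0 < q" "q \<le> 1"
  shows "(x + y) powr q \<le> 2 * (x powr q + y powr q)"
proof -
  have "(x + y) powr q \<le> (2 * max x y) powr q"
    using assms by (intro powr_mono2) auto
  also have "\<dots> = 2 powr q * max x y powr q"
    using assms by (simp add: powr_mult)
  also have "\<dots> \<le> 2 * max x y powr q"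
    using assms by (intro mult_right_mono) (auto intro: order.trans[OF powr_mono[of q 1]])
  also have "\<dots> \<le> 2 * (x powr q + y powr q)"
    by (auto simp: max_def)
  finally show ?thesis .
qed

lemma enn_pow_add_le:
  assumes "0 < q" "q \<le> 1"
  shows "enn_pow (a + b) q \<le> 2 * (enn_pow a q + enn_pow b q)"
proof (cases "a = \<infinity> \<or> b = \<infinity>")
  case True then show ?thesis unfolding enn_pow_def by (auto simp: ennreal_mult_top)
next
  case False
  then obtain x y where xy: "a = ennreal x" "b = ennreal y" "x \<ge> 0" "y \<ge> 0"
    by (metis ennreal_cases top_ennreal.rep_eq infinity_ennreal_def)
  have "enn_pow (a + b) q = ennreal ((x + y) powr q)"
    using xy by (simp add: enn_pow_ennreal flip: ennreal_plus)
  also have "\<dots> \<le> ennreal (2 * (x powr q + y powr q))"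
    using xy assms by (intro ennreal_leI powr_add_le_two_mult) auto
  also have "\<dots> = 2 * (enn_pow a q + enn_pow b q)"
    using xy by (simp add: enn_pow_ennreal ennreal_mult ennreal_plus)
  finally show ?thesis .
qed

lemma weak_Lp_quasi_triangle:
  fixes g f h :: "'a::euclidean_space \<Rightarrow> ereal"
  assumes p: "p \<ge> 1" and le: "\<And>x. x \<in> E \<Longrightarrow> \<bar>g x\<bar> \<le> \<bar>f x\<bar> + \<bar>h x\<bar>"
  shows "weak_Lp p E g \<le> 4 * (weak_Lp p UNIV f + weak_Lp p UNIV h)"
  unfolding weak_Lp_def
proof (rule SUP_least)
  fix l :: real assume "l \<in> {0<..}"
  then have l: "l > 0" by simp
  have q: "0 < 1/p" "1/p \<le> 1" using p by auto
  define A where "A = {x\<in>UNIV. \<bar>f x\<bar> > ereal (l/2)}"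
  define B where "B = {x\<in>UNIV. \<bar>h x\<bar> > ereal (l/2)}"
  have "{x\<in>E. \<bar>g x\<bar> > ereal l} \<subseteq> A \<union> B"
  proof
    fix x assume x: "x \<in> {x\<in>E. \<bar>g x\<bar> > ereal l}"
    show "x \<in> A \<union> B"
    proof (rule ccontr)
      assume "x \<notin> A \<union> B"
      then have "\<bar>f x\<bar> + \<bar>h x\<bar> \<le> ereal (l/2) + ereal (l/2)"
        unfolding A_def B_def by (intro add_mono) auto
      then have "\<bar>g x\<bar> \<le> ereal l" using le[of x] x by simp
      then show False using x by (simp add: not_less[symmetric])
    qed
  qed
  then have "ennreal l * enn_pow (leb_outer {x\<in>E. \<bar>g x\<bar> > ereal l}) (1/p)
      \<le> ennreal l * (2 * (enn_pow (leb_outer A) (1/p) + enn_pow (leb_outer B) (1/p)))"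
    using q by (intro mult_left_mono order.trans[OF enn_pow_mono enn_pow_add_le] leb_outer_subadditive) auto
  also have "\<dots> = 4 * (ennreal (l/2) * enn_pow (leb_outer A) (1/p) + ennreal (l/2) * enn_pow (leb_outer B) (1/p))"
  proof -
    have "ennreal (2 * (l/2)) = ennreal 2 * ennreal (l/2)"
      using l by (intro ennreal_mult) auto
    then have "ennreal l = 2 * ennreal (l/2)" by simp
    then show ?thesis by (simp add: algebra_simps)
  qed
  also have "\<dots> \<le> 4 * ((SUP l\<in>{0<..}. ennreal l * enn_pow (leb_outer {x\<in>UNIV. \<bar>f x\<bar> > ereal l}) (1/p))
      + (SUP l\<in>{0<..}. ennreal l * enn_pow (leb_outer {x\<in>UNIV. \<bar>h x\<bar> > ereal l}) (1/p)))"
    unfolding A_def B_def using l by (intro mult_left_mono add_mono SUP_upper) auto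
  finally show "ennreal l * enn_pow (leb_outer {x\<in>E. \<bar>g x\<bar> > ereal l}) (1/p) \<le> \<dots>" .
qed

lemma weak_Lp_power_kernel:
  fixes D d :: real
  assumes d: "d > 0" and D: "D \<ge> 0"
  shows "weak_Lp (real DIM('a) / d) UNIV (\<lambda>x::'a::euclidean_space. ereal (D * norm x powr -d))
    \<le> ennreal (D * unit_ball_vol (real DIM('a)) powr (d / real DIM('a)))"
  unfolding weak_Lp_def
proof (rule SUP_least)
  fix l :: real assume "l \<in> {0<..}"
  then have l: "l > 0" by simp
  define n where "n = real DIM('a)"
  have n: "n > 0" unfolding n_def by simp
  let ?L = "{x\<in>UNIV. \<bar>ereal (D * norm (x::'a) powr -d)\<bar> > ereal l}"
  show "ennreal l * enn_pow (leb_outer ?L) (1 / (n / d)) \<le> ennreal (D * unit_ball_vol n powr (d / n))"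
  proof (cases "D = 0")
    case True
    then have "?L = {}" using l by auto
    moreover have "leb_outer ({}::'a set) = 0"
      using leb_outer_le_emeasure[of "{}" "{}::'a set"] by simp
    ultimately show ?thesis by (simp add: enn_pow_def)
  next
    case False
    with D have Dp: "D > 0" by simp
    define r0 where "r0 = (D/l) powr (1/d)"
    have r0: "r0 > 0" using Dp l unfolding r0_def by simp
    have r0d: "r0 powr d = D/l" unfolding r0_def using d Dp l by (simp add: powr_powr)
    have "?L \<subseteq> ball 0 r0"
    proof
      fix x :: 'a assume x: "x \<in> ?L"
      show "x \<in> ball 0 r0"
      proof (rule ccontr)
        assume "x \<notin> ball 0 r0"
        then have "norm x powr -d \<le> r0 powr -d"
          using r0 d by (intro powr_mono2') auto
        also have "\<dots> = l/D" using r0d r0 by (simp add: powr_minus_divide)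
        finally have "D * norm x powr -d \<le> l"
          using Dp by (simp add: field_simps)
        with x show False using Dp by auto
      qed
    qed
    then have "leb_outer ?L \<le> emeasure lebesgue (ball (0::'a) r0)"
      by (intro leb_outer_le_emeasure) auto
    also have "\<dots> = ennreal (unit_ball_vol n * r0 ^ DIM('a))"
      using emeasure_ball[of r0 "0::'a"] r0 unfolding n_def by simp
    finally have "enn_pow (leb_outer ?L) (d/n) \<le> ennreal ((unit_ball_vol n * r0 ^ DIM('a)) powr (d/n))"
      using d n r0 by (subst enn_pow_ennreal[symmetric]) (auto intro!: enn_pow_mono)
    also have "(unit_ball_vol n * r0 ^ DIM('a)) powr (d/n) = unit_ball_vol n powr (d/n) * (D/l)"
      using r0 n d r0d by (simp add: powr_mult powr_realpow[symmetric] powr_powr n_def)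
    finally have "ennreal l * enn_pow (leb_outer ?L) (d/n) \<le> ennreal l * ennreal (unit_ball_vol n powr (d/n) * (D/l))"
      by (intro mult_left_mono) auto
    also have "\<dots> = ennreal (D * unit_ball_vol n powr (d / n))"
      using l Dp by (simp add: field_simps flip: ennreal_mult)
    finally show ?thesis by simp
  qed
qed

section \<open>Radial kernel\<close>

definition kernel_peak :: "(real \<Rightarrow> real) \<Rightarrow> real \<Rightarrow> real" where
  "kernel_peak Phi d = (SUP r\<in>{0<..}. r powr -d * Phi (1/r))"

lemma phi_dil_eq: "r > 0 \<Longrightarrow> phi_dil Phi \<alpha> r x = r powr -(real DIM('a) - \<alpha>) * Phi (norm x / r)"
  for x :: "'a::euclidean_space"
  unfolding phi_dil_def by simp

lemma bdd_above_profile_of_phi_dil: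
  fixes e :: "'a::euclidean_space"
  assumes "norm e = 1" and "bdd_above ((\<lambda>r. phi_dil Phi \<alpha> r e) ` {0<..})"
  shows "bdd_above ((\<lambda>r. r powr -(real DIM('a) - \<alpha>) * Phi (1/r)) ` {0<..})"
proof -
  have "(\<lambda>r. phi_dil Phi \<alpha> r e) ` {0<..} = (\<lambda>r. r powr -(real DIM('a) - \<alpha>) * Phi (1/r)) ` {0<..}"
    using assms(1) by (intro image_cong refl) (simp add: phi_dil_eq)
  with assms(2) show ?thesis by simp
qed

lemma kernel_peak_nonneg:
  assumes "bdd_above ((\<lambda>r. r powr -d * Phi (1/r)) ` {0<..})" and "Phi 1 \<ge> 0"
  shows "kernel_peak Phi d \<ge> 0"
proof -
  have "1 powr -d * Phi (1/1) \<le> kernel_peak Phi d"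
    unfolding kernel_peak_def by (rule cSUP_upper[OF _ assms(1)]) auto
  with assms(2) show ?thesis by simp
qed

lemma
  fixes Phi :: "real \<Rightarrow> real"
  assumes bdd: "bdd_above ((\<lambda>r. r powr -d * Phi (1/r)) ` {0<..})" and s: "s > 0"
  shows bdd_above_profile_scaled: "bdd_above ((\<lambda>r. r powr -d * Phi (s/r)) ` {0<..})"
    and SUP_profile_scaled: "(SUP r\<in>{0<..}. r powr -d * Phi (s/r)) = kernel_peak Phi d * s powr -d"
proof -
  let ?K = "kernel_peak Phi d"
  have le: "r powr -d * Phi (s/r) \<le> ?K * s powr -d" if "r > 0" for r
  proof -
    have "(r/s) powr -d * Phi (1/(r/s)) \<le> ?K"
      unfolding kernel_peak_def using that s by (intro cSUP_upper[OF _ bdd]) auto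
    then have "s powr -d * ((r/s) powr -d * Phi (1/(r/s))) \<le> s powr -d * ?K"
      by (intro mult_left_mono) auto
    moreover have "r powr -d * Phi (s/r) = s powr -d * ((r/s) powr -d * Phi (1/(r/s)))"
      using s that by (simp add: powr_divide)
    ultimately show ?thesis by (metis mult.commute)
  qed
  show b: "bdd_above ((\<lambda>r. r powr -d * Phi (s/r)) ` {0<..})"
    using le by (intro bdd_aboveI2) auto
  show "(SUP r\<in>{0<..}. r powr -d * Phi (s/r)) = ?K * s powr -d"
  proof (rule antisym)
    show "(SUP r\<in>{0<..}. r powr -d * Phi (s/r)) \<le> ?K * s powr -d"
      by (rule cSUP_least) (use le in auto)
    have "?K \<le> (SUP r\<in>{0<..}. r powr -d * Phi (s/r)) / s powr -d"
      unfolding kernel_peak_def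
    proof (rule cSUP_least)
      fix u :: real assume u: "u \<in> {0<..}"
      have "u powr -d * Phi (1/u) = (s*u) powr -d * Phi (s/(s*u)) / s powr -d"
        using u s by (simp add: powr_mult)
      also have "\<dots> \<le> (SUP r\<in>{0<..}. r powr -d * Phi (s/r)) / s powr -d"
        using u s by (intro divide_right_mono cSUP_upper[OF _ b]) auto
      finally show "u powr -d * Phi (1/u) \<le> (SUP r\<in>{0<..}. r powr -d * Phi (s/r)) / s powr -d" .
    qed auto
    then show "?K * s powr -d \<le> (SUP r\<in>{0<..}. r powr -d * Phi (s/r))"
      using s by (simp add: pos_le_divide_eq)
  qed
qed

lemma ereal_SUP_bdd:
  assumes "A \<noteq> {}" "bdd_above (f ` A)"
  shows "ereal (SUP a\<in>A. f a) = (SUP a\<in>A. ereal (f a))"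
proof (rule ereal_SUP)
  obtain a where a: "a \<in> A" using assms(1) by blast
  have "(SUP a\<in>A. ereal (f a)) \<le> ereal (SUP a\<in>A. f a)"
    using assms(2) by (intro SUP_least) (auto intro: cSUP_upper)
  moreover have "ereal (f a) \<le> (SUP a\<in>A. ereal (f a))"
    using a by (rule SUP_upper)
  ultimately show "\<bar>SUP a\<in>A. ereal (f a)\<bar> \<noteq> \<infinity>"
    by (cases "SUP a\<in>A. ereal (f a)") auto
qed

lemma SUP_phi_dil:
  fixes x :: "'a::euclidean_space"
  assumes bdd: "bdd_above ((\<lambda>r. r powr -(real DIM('a) - \<alpha>) * Phi (1/r)) ` {0<..})" and x: "x \<noteq> 0"
  shows "(SUP r\<in>{0<..}. ereal (phi_dil Phi \<alpha> r x))
    = ereal (kernel_peak Phi (real DIM('a) - \<alpha>) * norm x powr -(real DIM('a) - \<alpha>))"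
proof -
  have s: "norm x > 0" using x by simp
  have "(SUP r\<in>{0<..}. ereal (phi_dil Phi \<alpha> r x))
      = (SUP r\<in>{0<..}. ereal (r powr -(real DIM('a) - \<alpha>) * Phi (norm x / r)))"
    by (intro SUP_cong refl) (simp add: phi_dil_eq)
  also have "\<dots> = ereal (SUP r\<in>{0<..}. r powr -(real DIM('a) - \<alpha>) * Phi (norm x / r))"
    using bdd_above_profile_scaled[OF bdd s] by (intro ereal_SUP_bdd[symmetric]) auto
  finally show ?thesis by (simp only: SUP_profile_scaled[OF bdd s])
qed

lemma borel_measurable_radial_profile:
  fixes Phi :: "real \<Rightarrow> real"
  assumes "antimono_on {0..} Phi"
  shows "(\<lambda>z::'a::euclidean_space. ennreal (Phi (norm ((1/r) *\<^sub>R (x - z))))) \<in> borel_measurable borel"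
proof -
  have "mono (\<lambda>s. - Phi (max s 0))"
    using assms by (auto simp: mono_def monotone_on_def)
  then have "(\<lambda>s. - Phi (max s 0)) \<in> borel_measurable borel"
    by (rule borel_measurable_mono)
  then have m: "(\<lambda>s. Phi (max s 0)) \<in> borel_measurable borel"
    using borel_measurable_uminus by fastforce
  then have "(\<lambda>z::'a. Phi (max (norm ((1/r) *\<^sub>R (x - z))) 0)) \<in> borel_measurable borel"
    by (intro measurable_compose[OF _ m]) auto
  then show ?thesis by simp
qed

section \<open>Maximal function of a dilated measure\<close>

lemma frac_max_eq_SUP_ennreal:
  "frac_max Phi \<alpha> \<mu> x = (SUP r\<in>{0<..}. enn2ereal (ennreal (r powr (-(real DIM('a) - \<alpha>))) *
        (\<integral>\<^sup>+ y. ennreal (Phi (norm ((1 / r) *\<^sub>R (x - y)))) \<partial>\<mu>)))"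
  for x :: "'a::euclidean_space"
  unfolding frac_max_def by (intro SUP_cong refl) (simp add: times_ennreal.rep_eq)

lemma frac_max_le_plus:
  fixes x :: "'a::euclidean_space"
  assumes "A \<ge> 0"
    and "\<And>r. r > 0 \<Longrightarrow> ennreal (r powr (-(real DIM('a) - \<alpha>))) * (\<integral>\<^sup>+ y. ennreal (Phi (norm ((1 / r) *\<^sub>R (x - y)))) \<partial>\<mu>)
       \<le> ennreal A + ennreal (r powr (-(real DIM('a) - \<alpha>))) * (\<integral>\<^sup>+ y. ennreal (Phi (norm ((1 / r) *\<^sub>R (x - y)))) \<partial>\<nu>)"
  shows "frac_max Phi \<alpha> \<mu> x \<le> ereal A + frac_max Phi \<alpha> \<nu> x"
  unfolding frac_max_eq_SUP_ennreal[of Phi \<alpha> \<mu>]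
proof (rule SUP_least)
  fix r :: real assume r: "r \<in> {0<..}"
  let ?I = "\<lambda>\<mu>. ennreal (r powr (-(real DIM('a) - \<alpha>))) * (\<integral>\<^sup>+ y. ennreal (Phi (norm ((1 / r) *\<^sub>R (x - y)))) \<partial>\<mu>)"
  have "enn2ereal (?I \<mu>) \<le> enn2ereal (ennreal A + ?I \<nu>)"
    using assms(2)[of r] r by (intro less_eq_ennreal.rep_eq[THEN iffD1]) simp
  also have "\<dots> = ereal A + enn2ereal (?I \<nu>)"
    using assms(1) by (simp add: plus_ennreal.rep_eq)
  also have "\<dots> \<le> ereal A + frac_max Phi \<alpha> \<nu> x"
    unfolding frac_max_eq_SUP_ennreal[of Phi \<alpha> \<nu>] by (intro add_left_mono SUP_upper r)
  finally show "enn2ereal (?I \<mu>) \<le> ereal A + frac_max Phi \<alpha> \<nu> x" .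
qed

lemma ereal_le_frac_max:
  fixes x :: "'a::euclidean_space"
  assumes "B \<ge> 0" "r > 0"
    and "ennreal B \<le> ennreal (r powr (-(real DIM('a) - \<alpha>))) * (\<integral>\<^sup>+ y. ennreal (Phi (norm ((1 / r) *\<^sub>R (x - y)))) \<partial>\<mu>)"
  shows "ereal B \<le> frac_max Phi \<alpha> \<mu> x"
proof -
  have "ereal B = enn2ereal (ennreal B)" using assms by simp
  also have "\<dots> \<le> enn2ereal (ennreal (r powr (-(real DIM('a) - \<alpha>))) * (\<integral>\<^sup>+ y. ennreal (Phi (norm ((1 / r) *\<^sub>R (x - y)))) \<partial>\<mu>))"
    using assms(3) by (intro less_eq_ennreal.rep_eq[THEN iffD1])
  also have "\<dots> \<le> frac_max Phi \<alpha> \<mu> x"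
    unfolding frac_max_eq_SUP_ennreal[of Phi \<alpha> \<mu>] by (intro SUP_upper) (use assms in auto)
  finally show ?thesis .
qed

lemma frac_max_nonneg: "0 \<le> frac_max Phi \<alpha> \<mu> x"
  using ereal_le_frac_max[where B=0 and r=1 and \<mu>=\<mu> and Phi=Phi and \<alpha>=\<alpha> and x=x]
  by (simp add: zero_ereal_def)

lemma nn_integral_dilate_measure:
  fixes V :: "'a::euclidean_space measure"
  assumes V: "sets V = sets borel" and f: "f \<in> borel_measurable borel"
  shows "(\<integral>\<^sup>+ y. f y \<partial>dilate_measure t V) = (\<integral>\<^sup>+ y. f (t *\<^sub>R y) \<partial>V)"
  unfolding dilate_measure_def
  by (rule nn_integral_distr) (auto simp: measurable_cong_sets[OF V refl] f)

lemma emeasure_dilate_measure_UNIV: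
  fixes V :: "'a::euclidean_space measure"
  assumes "sets V = sets borel"
  shows "emeasure (dilate_measure t V) UNIV = emeasure V UNIV"
  unfolding dilate_measure_def using assms sets_eq_imp_space_eq[OF assms]
  by (subst emeasure_distr) (auto simp: measurable_cong_sets[OF assms refl])

lemma kernel_integral_dilate_le:
  fixes V :: "'a::euclidean_space measure" and Phi :: "real \<Rightarrow> real"
  assumes V: "sets V = sets borel" and t: "t > 0" and r: "r > 0"
    and xR: "norm x > t * R" and Phi_decr: "antimono_on {0..} Phi"
  shows "(\<integral>\<^sup>+ y. ennreal (Phi (norm ((1 / r) *\<^sub>R (x - y)))) \<partial>dilate_measure t V)
     \<le> ennreal (Phi ((norm x - t*R)/r)) * emeasure V UNIV +
        (\<integral>\<^sup>+ y. ennreal (Phi (norm ((1 / r) *\<^sub>R (x - y)))) \<partial>dilate_measure t (density V (indicator (- cball 0 R))))"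
proof -
  let ?f = "\<lambda>z. ennreal (Phi (norm ((1 / r) *\<^sub>R (x - z))))"
  let ?c = "ennreal (Phi ((norm x - t*R)/r))"
  have fm: "?f \<in> borel_measurable borel" by (rule borel_measurable_radial_profile[OF Phi_decr])
  have "(\<lambda>y. t *\<^sub>R y) \<in> measurable V borel"
    by (simp add: measurable_cong_sets[OF V refl])
  from measurable_compose[OF this fm] have fm': "(\<lambda>y. ?f (t *\<^sub>R y)) \<in> borel_measurable V" .
  have B: "cball (0::'a) R \<in> sets V" "- cball (0::'a) R \<in> sets V" using V by auto
  have "(\<integral>\<^sup>+ y. ?f y \<partial>dilate_measure t V) = (\<integral>\<^sup>+ y. ?f (t *\<^sub>R y) \<partial>V)"
    by (rule nn_integral_dilate_measure[OF V fm])
  also have "\<dots> \<le> (\<integral>\<^sup>+ y. ?c * indicator (cball 0 R) y + indicator (- cball 0 R) y * ?f (t *\<^sub>R y) \<partial>V)"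
  proof (rule nn_integral_mono)
    fix y :: 'a
    show "?f (t *\<^sub>R y) \<le> ?c * indicator (cball 0 R) y + indicator (- cball 0 R) y * ?f (t *\<^sub>R y)"
    proof (cases "y \<in> cball 0 R")
      case True
      then have "norm (t *\<^sub>R y) \<le> t*R"
        using t by (simp add: mult_left_mono)
      then have "norm x - t*R \<le> norm (x - t *\<^sub>R y)"
        using norm_triangle_ineq2[of x "t *\<^sub>R y"] by linarith
      then have "Phi (norm (x - t *\<^sub>R y)/r) \<le> Phi ((norm x - t*R)/r)"
        using Phi_decr xR r unfolding monotone_on_def by (auto simp: divide_right_mono)
      then show ?thesis using True r by (simp add: ennreal_leI)
    qed simp
  qed
  also have "\<dots> = ?c * emeasure V (cball 0 R) + (\<integral>\<^sup>+ y. indicator (- cball 0 R) y * ?f (t *\<^sub>R y) \<partial>V)"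
    using B fm' by (subst nn_integral_add) (auto simp: nn_integral_cmult_indicator)
  also have "\<dots> \<le> ?c * emeasure V UNIV + (\<integral>\<^sup>+ y. indicator (- cball 0 R) y * ?f (t *\<^sub>R y) \<partial>V)"
    using V by (intro add_right_mono mult_left_mono emeasure_mono) auto
  also have "(\<integral>\<^sup>+ y. indicator (- cball 0 R) y * ?f (t *\<^sub>R y) \<partial>V)
      = (\<integral>\<^sup>+ y. ?f y \<partial>dilate_measure t (density V (indicator (- cball 0 R))))"
  proof -
    have "indicator (- cball (0::'a) R) \<in> borel_measurable V"
      using B by simp
    then have "(\<integral>\<^sup>+ y. indicator (- cball 0 R) y * ?f (t *\<^sub>R y) \<partial>V)
        = (\<integral>\<^sup>+ y. ?f (t *\<^sub>R y) \<partial>density V (indicator (- cball 0 R)))"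
      using fm' by (rule nn_integral_density[symmetric])
    also have "\<dots> = (\<integral>\<^sup>+ y. ?f y \<partial>dilate_measure t (density V (indicator (- cball 0 R))))"
      using V by (intro nn_integral_dilate_measure[symmetric] fm) simp
    finally show ?thesis .
  qed
  finally show ?thesis .
qed

lemma kernel_integral_dilate_ge:
  fixes V :: "'a::euclidean_space measure" and Phi :: "real \<Rightarrow> real"
  assumes V: "sets V = sets borel" and t: "t > 0" and r: "r > 0" and Phi_decr: "antimono_on {0..} Phi"
  shows "ennreal (Phi ((norm x + t*R)/r)) * emeasure V (cball 0 R) \<le>
     (\<integral>\<^sup>+ y. ennreal (Phi (norm ((1 / r) *\<^sub>R (x - y)))) \<partial>dilate_measure t V)"
proof -
  let ?f = "\<lambda>z. ennreal (Phi (norm ((1 / r) *\<^sub>R (x - z))))"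
  let ?c = "ennreal (Phi ((norm x + t*R)/r))"
  have "?c * emeasure V (cball 0 R) = (\<integral>\<^sup>+ y. ?c * indicator (cball 0 R) y \<partial>V)"
    using V by (intro nn_integral_cmult_indicator[symmetric]) auto
  also have "\<dots> \<le> (\<integral>\<^sup>+ y. ?f (t *\<^sub>R y) \<partial>V)"
  proof (rule nn_integral_mono)
    fix y :: 'a
    show "?c * indicator (cball 0 R) y \<le> ?f (t *\<^sub>R y)"
    proof (cases "y \<in> cball 0 R")
      case True
      then have "norm (t *\<^sub>R y) \<le> t*R"
        using t by (simp add: mult_left_mono)
      then have "norm (x - t *\<^sub>R y) \<le> norm x + t*R"
        using norm_triangle_ineq4[of x "t *\<^sub>R y"] by linarith
      then have "norm (x - t *\<^sub>R y)/r \<le> (norm x + t*R)/r"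
        using r by (simp add: divide_right_mono)
      moreover have "0 \<le> norm (x - t *\<^sub>R y)/r" using r by simp
      ultimately have "Phi ((norm x + t*R)/r) \<le> Phi (norm (x - t *\<^sub>R y)/r)"
        using Phi_decr unfolding monotone_on_def by (meson atLeast_iff order.trans)
      then show ?thesis using True r by (simp add: ennreal_leI)
    qed simp
  qed
  also have "\<dots> = (\<integral>\<^sup>+ y. ?f y \<partial>dilate_measure t V)"
    by (rule nn_integral_dilate_measure[symmetric, OF V borel_measurable_radial_profile[OF Phi_decr]])
  finally show ?thesis .
qed

lemma frac_max_dilate_le:
  fixes V :: "'a::euclidean_space measure" and x :: 'a and \<alpha> :: real and Phi :: "real \<Rightarrow> real"
  defines "d \<equiv> real DIM('a) - \<alpha>"
  assumes bdd: "bdd_above ((\<lambda>r. r powr -d * Phi (1/r)) ` {0<..})"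
    and Phi_nonneg: "\<forall>s\<ge>0. Phi s \<ge> 0" and Phi_decr: "antimono_on {0..} Phi"
    and V: "sets V = sets borel" and fin: "emeasure V UNIV < \<infinity>"
    and t: "t > 0" and xR: "norm x > t * R"
  shows "frac_max Phi \<alpha> (dilate_measure t V) x
    \<le> ereal (kernel_peak Phi d * (norm x - t*R) powr -d * measure V UNIV)
      + frac_max Phi \<alpha> (dilate_measure t (density V (indicator (- cball 0 R)))) x"
proof (rule frac_max_le_plus)
  define m where "m = measure V UNIV"
  have Vm: "emeasure V UNIV = ennreal m"
    unfolding m_def using fin by (intro emeasure_eq_ennreal_measure) auto
  have m0: "m \<ge> 0" unfolding m_def by simp
  have su: "norm x - t*R > 0" using xR by simp
  show "0 \<le> kernel_peak Phi d * (norm x - t*R) powr -d * measure V UNIV"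
    using kernel_peak_nonneg[OF bdd] Phi_nonneg by simp
  fix r :: real assume r: "r > 0"
  let ?I = "\<lambda>\<mu>. \<integral>\<^sup>+ y. ennreal (Phi (norm ((1 / r) *\<^sub>R (x - y)))) \<partial>\<mu>"
  let ?W = "density V (indicator (- cball 0 R))"
  have "ennreal (r powr -d) * ?I (dilate_measure t V)
      \<le> ennreal (r powr -d) * (ennreal (Phi ((norm x - t*R)/r)) * ennreal m + ?I (dilate_measure t ?W))"
    using kernel_integral_dilate_le[OF V t r xR Phi_decr] unfolding Vm by (rule mult_left_mono) simp
  also have "\<dots> = ennreal (r powr -d * Phi ((norm x - t*R)/r) * m) + ennreal (r powr -d) * ?I (dilate_measure t ?W)"
    using Phi_nonneg su r m0 by (simp add: distrib_left ennreal_mult mult.assoc)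
  also have "\<dots> \<le> ennreal (kernel_peak Phi d * (norm x - t*R) powr -d * m) + ennreal (r powr -d) * ?I (dilate_measure t ?W)"
    using cSUP_upper[OF _ bdd_above_profile_scaled[OF bdd su], of r] SUP_profile_scaled[OF bdd su] r m0
    by (intro add_right_mono ennreal_leI mult_right_mono) auto
  finally show "ennreal (r powr -(real DIM('a) - \<alpha>)) * ?I (dilate_measure t V)
      \<le> ennreal (kernel_peak Phi d * (norm x - t*R) powr -d * measure V UNIV)
        + ennreal (r powr -(real DIM('a) - \<alpha>)) * ?I (dilate_measure t ?W)"
    unfolding d_def m_def .
qed

lemma frac_max_dilate_ge:
  fixes V :: "'a::euclidean_space measure" and x :: 'a and \<alpha> :: real and Phi :: "real \<Rightarrow> real"
  defines "d \<equiv> real DIM('a) - \<alpha>"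
  assumes bdd: "bdd_above ((\<lambda>r. r powr -d * Phi (1/r)) ` {0<..})"
    and Phi_nonneg: "\<forall>s\<ge>0. Phi s \<ge> 0" and Phi_decr: "antimono_on {0..} Phi"
    and V: "sets V = sets borel" and fin: "emeasure V UNIV < \<infinity>"
    and t: "t > 0" and R: "R \<ge> 0" and x: "x \<noteq> 0"
  shows "ereal (kernel_peak Phi d * (norm x + t*R) powr -d * measure V (cball 0 R))
    \<le> frac_max Phi \<alpha> (dilate_measure t V) x"
proof -
  define c where "c = measure V (cball 0 R)"
  have Vc: "emeasure V (cball 0 R) = ennreal c"
  proof -
    have "emeasure V (cball 0 R) \<le> emeasure V UNIV"
      using V by (intro emeasure_mono) auto
    then show ?thesis
      unfolding c_def using fin by (intro emeasure_eq_ennreal_measure) auto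
  qed
  have c0: "c \<ge> 0" unfolding c_def by simp
  have su: "norm x + t*R > 0" using x t R by (simp add: add_pos_nonneg)
  let ?g = "\<lambda>r. r powr -d * Phi ((norm x + t*R)/r)"
  have g: "ereal (?g r * c) \<le> frac_max Phi \<alpha> (dilate_measure t V) x" if r: "r > 0" for r
  proof (rule ereal_le_frac_max)
    have P0: "Phi ((norm x + t*R)/r) \<ge> 0" using Phi_nonneg su r by simp
    then show "0 \<le> ?g r * c" using c0 by simp
    show "r > 0" by fact
    have "ennreal (?g r * c) = ennreal (r powr -d) * (ennreal (Phi ((norm x + t*R)/r)) * emeasure V (cball 0 R))"
      using P0 c0 Vc by (simp add: ennreal_mult mult.assoc)
    also have "\<dots> \<le> ennreal (r powr -d) * (\<integral>\<^sup>+ y. ennreal (Phi (norm ((1 / r) *\<^sub>R (x - y)))) \<partial>dilate_measure t V)"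
      using kernel_integral_dilate_ge[OF V t r Phi_decr] by (rule mult_left_mono) simp
    finally show "ennreal (?g r * c) \<le> ennreal (r powr -(real DIM('a) - \<alpha>)) * (\<integral>\<^sup>+ y. ennreal (Phi (norm ((1 / r) *\<^sub>R (x - y)))) \<partial>dilate_measure t V)"
      unfolding d_def .
  qed
  have "ereal (kernel_peak Phi d * (norm x + t*R) powr -d * c) = ereal (SUP r\<in>{0<..}. ?g r) * ereal c"
    by (simp add: SUP_profile_scaled[OF bdd su])
  also have "\<dots> = (SUP r\<in>{0<..}. ereal (?g r)) * ereal c"
    using bdd_above_profile_scaled[OF bdd su] by (simp add: ereal_SUP_bdd)
  also have "\<dots> = (SUP r\<in>{0<..}. ereal (?g r * c))"
    using c0 by (simp add: Sup_ereal_mult_right')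
  also have "\<dots> \<le> frac_max Phi \<alpha> (dilate_measure t V) x"
    using g by (intro SUP_least) auto
  finally show ?thesis unfolding c_def .
qed

section \<open>Deviation from the point-mass profile\<close>

lemma ereal_abs_sub_le_of_sandwich:
  fixes M T :: ereal and P m \<eta> a b :: real
  assumes "0 \<le> P" "0 \<le> \<eta>" "\<eta> \<le> m" "1 \<le> a" "0 \<le> b" "b \<le> 1" "0 \<le> T"
    and upper: "M \<le> ereal (P * a * m) + T" and lower: "ereal (P * b * (m - \<eta>)) \<le> M"
  shows "\<bar>M - ereal (P * m)\<bar> \<le> ereal (P * (m * (a - b) + \<eta>)) + T"
proof (cases T)
  case (real T')
  then obtain M' where M': "M = ereal M'" using upper lower by (cases M) auto
  have "P * m * (a - 1) \<le> P * m * (a - b)" "P * m * (1 - b) \<le> P * m * (a - b)"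
    using assms by (intro mult_left_mono; simp)+
  moreover have "P * b * \<eta> \<le> P * 1 * \<eta>" "0 \<le> P * \<eta>"
    using assms by (intro mult_right_mono mult_left_mono mult_nonneg_nonneg; simp)+
  ultimately have "\<bar>M' - P * m\<bar> \<le> P * (m * (a - b) + \<eta>) + T'"
    using upper lower \<open>0 \<le> T\<close> unfolding M' real by (auto simp: abs_le_iff algebra_simps)
  then show ?thesis unfolding M' real by simp
qed (use \<open>0 \<le> T\<close> in auto)

lemma powr_neg_diff_le:
  fixes s u \<tau> d :: real
  assumes "0 < d" "0 \<le> \<tau>" "\<tau> < 1" "0 < s" "u \<le> s * \<tau>"
  shows "(s - u) powr -d \<le> s powr -d * (1 - \<tau>) powr -d"
proof -
  have "(s - u) powr -d \<le> (s * (1 - \<tau>)) powr -d"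
    using assms by (intro powr_mono2') (auto simp: algebra_simps)
  then show ?thesis using assms by (simp add: powr_mult)
qed

lemma powr_neg_add_ge:
  fixes s u \<tau> d :: real
  assumes "0 < d" "0 \<le> \<tau>" "0 < s" "0 \<le> u" "u \<le> s * \<tau>"
  shows "s powr -d * (1 + \<tau>) powr -d \<le> (s + u) powr -d"
proof -
  have "(s * (1 + \<tau>)) powr -d \<le> (s + u) powr -d"
    using assms by (intro powr_mono2') (auto simp: algebra_simps)
  then show ?thesis using assms by (simp add: powr_mult)
qed

lemma frac_max_dilate_deviation:
  fixes V :: "'a::euclidean_space measure" and x :: 'a and \<alpha> t R \<rho> :: real and Phi :: "real \<Rightarrow> real"
  defines "d \<equiv> real DIM('a) - \<alpha>" and "\<tau> \<equiv> t * R / \<rho>"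
  assumes \<alpha>: "\<alpha> < real DIM('a)" and bdd: "bdd_above ((\<lambda>r. r powr -d * Phi (1/r)) ` {0<..})"
    and Phi_nonneg: "\<forall>s\<ge>0. Phi s \<ge> 0" and Phi_decr: "antimono_on {0..} Phi"
    and V: "sets V = sets borel" and fin: "emeasure V UNIV < \<infinity>"
    and t: "t > 0" and R: "R \<ge> 0" and \<rho>: "\<rho> > 0" and x: "norm x \<ge> \<rho>" and tR: "t * R \<le> \<rho>/2"
  shows "\<bar>frac_max Phi \<alpha> (dilate_measure t V) x - ereal (kernel_peak Phi d * norm x powr -d * measure V UNIV)\<bar>
    \<le> ereal (kernel_peak Phi d * (measure V UNIV * ((1 - \<tau>) powr -d - (1 + \<tau>) powr -d)
          + measure V (- cball 0 R)) * norm x powr -d)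
      + frac_max Phi \<alpha> (dilate_measure t (density V (indicator (- cball 0 R)))) x"
proof -
  define K where "K = kernel_peak Phi d"
  define S where "S = norm x powr -d"
  define m where "m = measure V UNIV"
  define \<eta> where "\<eta> = measure V (- cball 0 R)"
  have d: "d > 0" using \<alpha> unfolding d_def by simp
  have \<tau>: "0 \<le> \<tau>" "\<tau> < 1" "t * R \<le> norm x * \<tau>"
    unfolding \<tau>_def using t R tR x \<rho> by (auto simp: field_simps mult_left_mono)
  have x0: "x \<noteq> 0" and xR: "norm x > t * R" using x \<rho> tR by auto
  have K: "K \<ge> 0" unfolding K_def using kernel_peak_nonneg[OF bdd] Phi_nonneg by simp
  interpret V: finite_measure V
    using fin sets_eq_imp_space_eq[OF V] by (intro finite_measureI) (simp add: less_top)
  have m: "measure V (cball 0 R) = m - \<eta>"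
    using V.finite_measure_compl[of "- cball 0 R"] V sets_eq_imp_space_eq[OF V]
    unfolding m_def \<eta>_def by (simp add: Compl_eq_Diff_UNIV Diff_Diff_Int)
  have \<eta>: "0 \<le> \<eta>" "\<eta> \<le> m"
    using m unfolding \<eta>_def by (simp_all, metis diff_ge_0_iff_ge measure_nonneg)
  have "K * (norm x - t*R) powr -d * m \<le> K * (S * (1 - \<tau>) powr -d) * m"
    using powr_neg_diff_le[OF d \<tau>(1,2) _ \<tau>(3)] K x0 unfolding m_def S_def
    by (intro mult_right_mono mult_left_mono) auto
  then have upper: "frac_max Phi \<alpha> (dilate_measure t V) x
      \<le> ereal (K * S * (1 - \<tau>) powr -d * m) + frac_max Phi \<alpha> (dilate_measure t (density V (indicator (- cball 0 R)))) x"
    using frac_max_dilate_le[OF bdd[unfolded d_def] Phi_nonneg Phi_decr V fin t xR]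
    unfolding K_def m_def d_def by (simp add: mult.assoc order_trans add_right_mono)
  have "K * (S * (1 + \<tau>) powr -d) * (m - \<eta>) \<le> K * (norm x + t*R) powr -d * (m - \<eta>)"
    using powr_neg_add_ge[OF d \<tau>(1) _ _ \<tau>(3)] K \<eta> x0 t R unfolding S_def
    by (intro mult_right_mono mult_left_mono) auto
  moreover have "ereal (K * (norm x + t*R) powr -d * (m - \<eta>)) \<le> frac_max Phi \<alpha> (dilate_measure t V) x"
    using frac_max_dilate_ge[OF bdd[unfolded d_def] Phi_nonneg Phi_decr V fin t R x0] m
    unfolding K_def m_def d_def by simp
  ultimately have lower: "ereal (K * S * (1 + \<tau>) powr -d * (m - \<eta>)) \<le> frac_max Phi \<alpha> (dilate_measure t V) x"
    by (metis ereal_less_eq(3) mult.assoc order_trans)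
  have "1 \<le> (1 - \<tau>) powr -d" "(1 + \<tau>) powr -d \<le> 1"
    using \<tau> d powr_mono2'[of "-d" "1 - \<tau>" 1] powr_mono2'[of "-d" 1 "1 + \<tau>"] by auto
  then show ?thesis
    using ereal_abs_sub_le_of_sandwich[OF _ \<eta> _ _ _ frac_max_nonneg upper lower] K
    unfolding K_def S_def m_def \<eta>_def by (simp add: ac_simps)
qed

lemma emeasure_dilate_density_compl_cball:
  fixes V :: "'a::euclidean_space measure"
  assumes V: "sets V = sets borel" and fin: "emeasure V UNIV < \<infinity>"
  shows "emeasure (dilate_measure t (density V (indicator (- cball 0 R)))) UNIV
    = ennreal (measure V (- cball 0 R))"
proof -
  have "emeasure (dilate_measure t (density V (indicator (- cball 0 R)))) UNIV = emeasure V (- cball 0 R)"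
    using V sets_eq_imp_space_eq[OF V]
    by (simp add: emeasure_dilate_measure_UNIV emeasure_density nn_integral_indicator)
  also have "\<dots> = ennreal (measure V (- cball 0 R))"
    using V fin emeasure_mono[of "- cball 0 R" UNIV V] by (intro emeasure_eq_ennreal_measure) auto
  finally show ?thesis .
qed

lemma weak_Lp_dilate_deviation_le:
  fixes V :: "'a::euclidean_space measure" and \<alpha> t R \<rho> C :: real and Phi :: "real \<Rightarrow> real"
  defines "d \<equiv> real DIM('a) - \<alpha>" and "\<omega> \<equiv> unit_ball_vol (real DIM('a)) powr ((real DIM('a) - \<alpha>) / real DIM('a))"
  assumes \<alpha>: "0 \<le> \<alpha>" "\<alpha> < real DIM('a)" and bdd: "bdd_above ((\<lambda>r. r powr -d * Phi (1/r)) ` {0<..})"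
    and Phi_nonneg: "\<forall>s\<ge>0. Phi s \<ge> 0" and Phi_decr: "antimono_on {0..} Phi"
    and V: "sets V = sets borel" and fin: "emeasure V UNIV < \<infinity>"
    and t: "t > 0" and R: "R \<ge> 0" and \<rho>: "\<rho> > 0" and tR: "t * R \<le> \<rho>/2"
    and C: "C \<ge> 0"
    and weak: "\<And>\<mu>::'a measure. sets \<mu> = sets borel \<Longrightarrow> emeasure \<mu> UNIV < \<infinity> \<Longrightarrow>
        weak_Lp (real DIM('a) / d) UNIV (frac_max Phi \<alpha> \<mu>) \<le> ennreal C * emeasure \<mu> UNIV"
  shows "weak_Lp (real DIM('a) / d) (UNIV - ball 0 \<rho>)
      (\<lambda>x. frac_max Phi \<alpha> (dilate_measure t V) x
            - (SUP r\<in>{0<..}. ereal (phi_dil Phi \<alpha> r x)) * enn2ereal (emeasure V UNIV))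
    \<le> ennreal (4 * (kernel_peak Phi d * measure V UNIV * ((1 - t*R/\<rho>) powr -d - (1 + t*R/\<rho>) powr -d) * \<omega>)
        + 4 * ((kernel_peak Phi d * \<omega> + C) * measure V (- cball 0 R)))"
proof -
  define K where "K = kernel_peak Phi d"
  define \<eta> where "\<eta> = measure V (- cball 0 R)"
  define D where "D = K * (measure V UNIV * ((1 - t*R/\<rho>) powr -d - (1 + t*R/\<rho>) powr -d) + \<eta>)"
  define W where "W = dilate_measure t (density V (indicator (- cball 0 R)))"
  have d: "0 < d" "d \<le> real DIM('a)" using \<alpha> unfolding d_def by auto
  have "0 \<le> t*R/\<rho>" "t*R/\<rho> < 1" using t R \<rho> tR by (auto simp: field_simps)
  then have "(1 + t*R/\<rho>) powr -d \<le> 1" "1 \<le> (1 - t*R/\<rho>) powr -d"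
    using d powr_mono2'[of "-d" 1 "1 + t*R/\<rho>"] powr_mono2'[of "-d" "1 - t*R/\<rho>" 1] by auto
  then have D: "D \<ge> 0"
    unfolding D_def K_def \<eta>_def using kernel_peak_nonneg[OF bdd] Phi_nonneg by simp
  have \<omega>: "\<omega> = unit_ball_vol (real DIM('a)) powr (d / real DIM('a))"
    unfolding \<omega>_def d_def ..
  have Vm: "emeasure V UNIV = ennreal (measure V UNIV)"
    using fin by (intro emeasure_eq_ennreal_measure) auto
  have pointwise: "\<bar>frac_max Phi \<alpha> (dilate_measure t V) x
        - (SUP r\<in>{0<..}. ereal (phi_dil Phi \<alpha> r x)) * enn2ereal (emeasure V UNIV)\<bar>
      \<le> \<bar>ereal (D * norm x powr -d)\<bar> + \<bar>frac_max Phi \<alpha> W x\<bar>"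
    if "x \<in> UNIV - ball 0 \<rho>" for x
  proof -
    have x: "norm x \<ge> \<rho>" "x \<noteq> 0" using that \<rho> by auto
    have "(SUP r\<in>{0<..}. ereal (phi_dil Phi \<alpha> r x)) * enn2ereal (emeasure V UNIV)
        = ereal (K * norm x powr -d * measure V UNIV)"
      using SUP_phi_dil[OF bdd[unfolded d_def] x(2)] unfolding Vm K_def d_def by simp
    moreover have "\<bar>ereal (D * norm x powr -d)\<bar> = ereal (D * norm x powr -d)" using D by simp
    moreover have "\<bar>frac_max Phi \<alpha> W x\<bar> = frac_max Phi \<alpha> W x"
      by (rule abs_ereal_ge0[OF frac_max_nonneg])
    ultimately show ?thesis
      using frac_max_dilate_deviation[OF \<alpha>(2) bdd[unfolded d_def] Phi_nonneg Phi_decr V fin t R \<rho> x(1) tR]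
      unfolding D_def K_def W_def \<eta>_def d_def by (simp add: ac_simps)
  qed
  have "weak_Lp (real DIM('a) / d) (UNIV - ball 0 \<rho>)
      (\<lambda>x. frac_max Phi \<alpha> (dilate_measure t V) x
            - (SUP r\<in>{0<..}. ereal (phi_dil Phi \<alpha> r x)) * enn2ereal (emeasure V UNIV))
    \<le> 4 * (weak_Lp (real DIM('a) / d) UNIV (\<lambda>x::'a. ereal (D * norm x powr -d))
        + weak_Lp (real DIM('a) / d) UNIV (frac_max Phi \<alpha> W))"
    using d pointwise by (intro weak_Lp_quasi_triangle) auto
  also have "\<dots> \<le> 4 * (ennreal (D * \<omega>) + ennreal C * ennreal \<eta>)"
    using weak_Lp_power_kernel[OF d(1) D, where 'a='a] weak[of W] emeasure_dilate_density_compl_cball[OF V fin]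
    unfolding \<omega> W_def \<eta>_def by (intro mult_left_mono add_mono) (auto simp: dilate_measure_def)
  also have "\<dots> = ennreal (4 * (D * \<omega>) + 4 * (C * \<eta>))"
    using D C unfolding \<omega> \<eta>_def by (simp add: ennreal_mult ennreal_plus)
  also have "4 * (D * \<omega>) + 4 * (C * \<eta>)
      = 4 * (K * measure V UNIV * ((1 - t*R/\<rho>) powr -d - (1 + t*R/\<rho>) powr -d) * \<omega>)
        + 4 * ((K * \<omega> + C) * \<eta>)"
    unfolding D_def by (simp add: algebra_simps)
  finally show ?thesis unfolding K_def \<eta>_def .
qed

lemma measure_compl_cball_tendsto_0:
  fixes V :: "'a::euclidean_space measure"
  assumes V: "sets V = sets borel" and "finite_measure V"
  shows "(\<lambda>k::nat. measure V (- cball 0 (real k))) \<longlonglongrightarrow> 0"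
proof -
  interpret V: finite_measure V by fact
  have "(\<lambda>k::nat. measure V (- cball 0 (real k))) \<longlonglongrightarrow> measure V (\<Inter>k. - cball (0::'a) (real k))"
  proof (rule V.finite_Lim_measure_decseq)
    show "range (\<lambda>k::nat. - cball (0::'a) (real k)) \<subseteq> sets V"
      using V by (auto simp: image_subset_iff)
    show "decseq (\<lambda>k::nat. - cball (0::'a) (real k))"
      unfolding decseq_def by (intro allI impI Compl_anti_mono subset_cball) simp
  qed
  moreover have "x \<notin> (\<Inter>k. - cball (0::'a) (real k))" for x :: 'a
  proof -
    obtain k :: nat where "norm x < real k" using reals_Archimedean2 by blast
    then have "x \<notin> - cball (0::'a) (real k)" by simp
    then show ?thesis by blast
  qed
  then have "(\<Inter>k. - cball (0::'a) (real k)) = {}" by blast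
  ultimately show ?thesis by simp
qed

lemma tendsto_0_at_right_of_eventual_bounds:
  fixes W :: "real \<Rightarrow> ennreal" and F :: "nat \<Rightarrow> real \<Rightarrow> real" and G :: "nat \<Rightarrow> real"
  assumes bound: "\<And>k. eventually (\<lambda>t. W t \<le> ennreal (F k t + G k)) (at_right 0)"
    and F: "\<And>k. (F k \<longlongrightarrow> 0) (at_right 0)" and G: "G \<longlonglongrightarrow> 0"
  shows "(W \<longlongrightarrow> 0) (at_right 0)"
proof (rule order_tendstoI)
  fix a :: ennreal assume "0 < a"
  then obtain b where b: "0 < b" "b < a" using dense by blast
  then obtain \<epsilon> where \<epsilon>: "b = ennreal \<epsilon>" "0 < \<epsilon>"
    by (cases b) (auto simp: top_unique)
  obtain k where Gk: "G k < \<epsilon>/2"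
    using order_tendstoD(2)[OF G, of "\<epsilon>/2"] \<epsilon> by (auto dest: eventually_happens)
  have "eventually (\<lambda>t. F k t < \<epsilon>/2) (at_right 0)"
    using order_tendstoD(2)[OF F, of "\<epsilon>/2"] \<epsilon> by simp
  then show "eventually (\<lambda>t. W t < a) (at_right 0)"
    using bound[of k]
  proof eventually_elim
    case (elim t)
    then have "ennreal (F k t + G k) \<le> ennreal \<epsilon>" using Gk by (intro ennreal_leI) simp
    then show ?case using elim b \<epsilon> by (metis order_le_less_trans order_trans)
  qed
qed simp

lemma obtain_nonneg_constant:
  assumes "\<exists>C::real. \<forall>x. P x \<longrightarrow> f x \<le> ennreal C * g x"
  obtains C where "C \<ge> 0" "\<And>x. P x \<Longrightarrow> f x \<le> ennreal C * g x"
proof -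
  obtain C0 where C0: "\<forall>x. P x \<longrightarrow> f x \<le> ennreal C0 * g x" using assms by blast
  show thesis
  proof (rule that[of "max C0 0"])
    fix x assume "P x"
    then have "f x \<le> ennreal C0 * g x" using C0 by blast
    also have "\<dots> \<le> ennreal (max C0 0) * g x" by (intro mult_right_mono ennreal_leI) auto
    finally show "f x \<le> ennreal (max C0 0) * g x" .
  qed simp
qed

theorem theorem1p1:
  fixes Phi :: "real \<Rightarrow> real" and \<alpha> :: real and e1 :: "'a::euclidean_space"
  assumes alpha: "0 \<le> \<alpha>" "\<alpha> < real DIM('a)"
    and Phi_nonneg: "\<forall>s\<ge>0. Phi s \<ge> 0"
    and Phi_decr: "antimono_on {0..} Phi"
    and e1: "e1 \<in> Basis"
    and sup_fin: "bdd_above ((\<lambda>r. phi_dil Phi \<alpha> r e1) ` {0<..})"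
    and weak_bound: "\<exists>C::real. \<forall>\<mu>::'a measure. sets \<mu> = sets borel \<and> emeasure \<mu> UNIV < \<infinity> \<longrightarrow>
        weak_Lp (real DIM('a) / (real DIM('a) - \<alpha>)) UNIV (frac_max Phi \<alpha> \<mu>)
          \<le> ennreal C * emeasure \<mu> UNIV"
  shows "\<forall>V::'a measure. \<forall>\<rho>>0. sets V = sets borel \<and> emeasure V UNIV < \<infinity> \<longrightarrow>
    ((\<lambda>t. weak_Lp (real DIM('a) / (real DIM('a) - \<alpha>)) (UNIV - ball 0 \<rho>)
        (\<lambda>x. frac_max Phi \<alpha> (dilate_measure t V) x
              - (SUP r\<in>{0<..}. ereal (phi_dil Phi \<alpha> r x)) * enn2ereal (emeasure V UNIV)))
      \<longlongrightarrow> 0) (at_right 0)"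
proof (intro allI impI)
  fix V :: "'a measure" and \<rho> :: real
  assume \<rho>: "\<rho> > 0" and "sets V = sets borel \<and> emeasure V UNIV < \<infinity>"
  then have V: "sets V = sets borel" and fin: "emeasure V UNIV < \<infinity>" by auto
  obtain C where C: "C \<ge> 0" "\<And>\<mu>::'a measure. sets \<mu> = sets borel \<and> emeasure \<mu> UNIV < \<infinity> \<Longrightarrow>
      weak_Lp (real DIM('a) / (real DIM('a) - \<alpha>)) UNIV (frac_max Phi \<alpha> \<mu>) \<le> ennreal C * emeasure \<mu> UNIV"
    using obtain_nonneg_constant[OF weak_bound] by blast
  have bdd: "bdd_above ((\<lambda>r. r powr -(real DIM('a) - \<alpha>) * Phi (1/r)) ` {0<..})"
    using bdd_above_profile_of_phi_dil[OF _ sup_fin] e1 by simp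
  define K where "K = kernel_peak Phi (real DIM('a) - \<alpha>)"
  define \<omega> where "\<omega> = unit_ball_vol (real DIM('a)) powr ((real DIM('a) - \<alpha>) / real DIM('a))"
  define h where "h t R = (1 - t*R/\<rho>) powr -(real DIM('a) - \<alpha>) - (1 + t*R/\<rho>) powr -(real DIM('a) - \<alpha>)"
    for t R :: real
  let ?W = "\<lambda>t. weak_Lp (real DIM('a) / (real DIM('a) - \<alpha>)) (UNIV - ball 0 \<rho>)
      (\<lambda>x. frac_max Phi \<alpha> (dilate_measure t V) x
            - (SUP r\<in>{0<..}. ereal (phi_dil Phi \<alpha> r x)) * enn2ereal (emeasure V UNIV))"
  show "(?W \<longlongrightarrow> 0) (at_right 0)"
  proof (rule tendsto_0_at_right_of_eventual_bounds)
    fix k :: nat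
    have "eventually (\<lambda>t. 0 < t \<and> t < \<rho> / (2 * (real k + 1))) (at_right 0)"
      unfolding eventually_at_right_field using \<rho> by (intro exI[of _ "\<rho> / (2 * (real k + 1))"]) auto
    then show "eventually (\<lambda>t. ?W t \<le> ennreal (4 * (K * measure V UNIV * h t (real k) * \<omega>)
        + 4 * ((K * \<omega> + C) * measure V (- cball 0 (real k))))) (at_right 0)"
    proof eventually_elim
      case (elim t)
      then have "t * real k \<le> \<rho>/2" using \<rho> by (simp add: field_simps)
      with elim show ?case
        using weak_Lp_dilate_deviation_le[OF alpha bdd Phi_nonneg Phi_decr V fin _ _ \<rho> _ C(1)] C(2)
        unfolding K_def \<omega>_def h_def by simp
    qed
    have "((\<lambda>t. 4 * (K * measure V UNIV * h t (real k) * \<omega>))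
        \<longlongrightarrow> 4 * (K * measure V UNIV * h 0 (real k) * \<omega>)) (at_right 0)"
      unfolding h_def using \<rho> by (intro tendsto_intros) auto
    then show "((\<lambda>t. 4 * (K * measure V UNIV * h t (real k) * \<omega>)) \<longlongrightarrow> 0) (at_right 0)"
      by (simp add: h_def)
  next
    show "(\<lambda>k. 4 * ((K * \<omega> + C) * measure V (- cball 0 (real k)))) \<longlonglongrightarrow> 0"
      using measure_compl_cball_tendsto_0[OF V] fin sets_eq_imp_space_eq[OF V]
      by (intro tendsto_mult_right_zero tendsto_mult_left_zero) (simp add: finite_measureI less_top)
  qed
qed

end
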